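(* Let $G$ be a simple undirected graph with adjacency matrix $A$, and let $0<\tau<\tau_c^{(1)}(G)$, so that $R_0(G,\tau)=\tau\lambda_1(A)<1$. Then for every initial condition $V(0)\in[0,1]^N$ and every $t\ge 0$, $$y(t;G,\tau,V(0)) \le y(t;G,\tau,u) \le e^{(R_0(G,\tau)-1)t}.$$ Consequently, for every $r\in(0,1)$, the upper-transition time satisfies $$\overline{T}(r)\le \frac{1}{1-R_0(G,\tau)}\log\left(\frac1r\right).$$
   Context: NIMFA SIS process (time rescaled so that the curing rate is $1$): for a simple undirected graph with $N\times N$ symmetric $0/1$ adjacency matrix $A$ (zero diagonal) and effective infection rate $\tau>0$, the infection probabilities $v_i(t)\in[0,1]$ evolve by $\frac{dv_i}{dt} = -v_i + \tau(1-v_i)\sum_{j=1}^N a_{ij}v_j$, $i=1,\dots,N$, with initial condition $V(0)\in[0,1]^N$. $y(t;G,\tau,V(0))=\frac1N\sum_i v_i(t)$ denotes the prevalence of this process. $u$ is the all-one vector. $\lambda_1(A)$ is the largest eigenvalue of $A$, $\tau_c^{(1)}(G)=1/\lambda_1(A)$, and $R_0(G,\tau)=\tau\lambda_1(A)$. When $\tau\le\tau_c^{(1)}(G)$ the steady-state prevalence is $y_\infty=0$. The upper-transition time is $\overline{T}(r)=\min\{t\ge 0: |y(t;G,\tau,V(0))-y_\infty|\le r \text{ for all } V(0) \text{ with } v_i(0)\in[r,1]\ \forall i\}$. *)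

theory Defs
  imports "HOL-Analysis.Analysis"
begin

text \<open>Vertices are indexed by a finite type 'n, so N = CARD('n).
  The adjacency matrix is a real matrix of type real^'n^'n.\<close>

definition simple_graph_adj :: "real^'n^'n \<Rightarrow> bool" where
  "simple_graph_adj A \<longleftrightarrow>
     (\<forall>i j. A $ i $ j = A $ j $ i) \<and>
     (\<forall>i j. A $ i $ j = 0 \<or> A $ i $ j = 1) \<and>
     (\<forall>i. A $ i $ i = 0)"

definition lambda1 :: "real^'n^'n \<Rightarrow> real" where
  "lambda1 A = Max {l. \<exists>x. x \<noteq> 0 \<and> A *v x = l *\<^sub>R x}"

definition R0 :: "real^'n^'n \<Rightarrow> real \<Rightarrow> real" where
  "R0 A tau = tau * lambda1 A"

definition nimfa_solution :: "real^'n^'n \<Rightarrow> real \<Rightarrow> real^'n \<Rightarrow> (real \<Rightarrow> real^'n) \<Rightarrow> bool" where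
  "nimfa_solution A tau V0 v \<longleftrightarrow>
     v 0 = V0 \<and>
     (\<forall>t\<ge>0. \<forall>i. ((\<lambda>s. v s $ i) has_real_derivative
         (- v t $ i + tau * (1 - v t $ i) * (\<Sum>j\<in>UNIV. A $ i $ j * v t $ j)))
         (at t within {0..}))"

definition prevalence :: "(real \<Rightarrow> real^'n) \<Rightarrow> real \<Rightarrow> real" where
  "prevalence v t = (\<Sum>i\<in>UNIV. v t $ i) / real CARD('n)"

definition unit_cube :: "real \<Rightarrow> (real^'n) set" where
  "unit_cube r = {V. \<forall>i. r \<le> V $ i \<and> V $ i \<le> 1}"

text \<open>Upper-transition time (steady state y_infinity = 0 below threshold):
  the least t \<ge> 0 such that |y(t) - 0| \<le> r for every initial condition with
  all v_i(0) in [r,1].\<close>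
definition upper_T :: "real^'n^'n \<Rightarrow> real \<Rightarrow> real \<Rightarrow> real" where
  "upper_T A tau r = Inf {t. t \<ge> 0 \<and>
     (\<forall>V0 \<in> unit_cube r. \<forall>v. nimfa_solution A tau V0 v \<longrightarrow> \<bar>prevalence v t - 0\<bar> \<le> r)}"

end

theory Submission
  imports Defs
begin

text \<open>The NIMFA flow keeps trajectories
  in \<open>[0,1]^N\<close> and is monotone in the initial state; both follow from one energy estimate: if the
  positive part \<open>p\<close> of a difference of trajectories satisfies \<open>p_i p_i' \<le> c p_i \<Sum>_j p_j\<close>, then
  \<open>\<Sum>_i p_i^2\<close> obeys a linear Gronwall inequality and stays zero. Hence \<open>y(t; V0) \<le> y(t; u)\<close>.
  For a nonnegative trajectory the infection term contributes at most \<open>tau v \<bullet> A v \<le> tau \<lambda>1 |v|^2\<close>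
  to \<open>d/dt |v|^2 / 2\<close> (the maximum of the quadratic form on the unit sphere is an eigenvalue), so
  \<open>|v(t)|^2 \<le> e^{2(R0-1)t} N\<close> and Cauchy-Schwarz gives \<open>y(t) \<le> e^{(R0-1)t}\<close>. The time at which this
  bound reaches \<open>r\<close> bounds the upper-transition time.\<close>

section \<open>Gronwall and positive-part estimates\<close>

lemma gronwall_inequality:
  fixes phi phi' :: "real \<Rightarrow> real"
  assumes "0 \<le> T"
    and deriv: "\<And>t. 0 \<le> t \<Longrightarrow> t \<le> T \<Longrightarrow> (phi has_real_derivative phi' t) (at t within {0..})"
    and growth: "\<And>t. 0 \<le> t \<Longrightarrow> t \<le> T \<Longrightarrow> phi' t \<le> K * phi t"
  shows "phi T \<le> exp (K * T) * phi 0"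
proof -
  define psi where "psi t = exp (- K * t) * phi t" for t
  define psi' where "psi' t = exp (- K * t) * (phi' t - K * phi t)" for t
  have dpsi: "(psi has_real_derivative psi' t) (at t within {0..})" if "0 \<le> t" "t \<le> T" for t
  proof -
    have "((\<lambda>t. exp (- K * t)) has_real_derivative exp (- K * t) * (- K)) (at t within {0..})"
      by (auto intro!: derivative_eq_intros)
    from DERIV_mult[OF this deriv[OF that]] show ?thesis
      unfolding psi_def[abs_def] psi'_def by (simp add: algebra_simps)
  qed
  have "psi T \<le> psi 0"
  proof (rule DERIV_nonpos_imp_decreasing_open[OF \<open>0 \<le> T\<close>])
    fix t assume t: "0 < t" "t < T"
    have "at t within {0..} = at t"
      using t by (intro at_within_interior) auto
    moreover have "psi' t \<le> 0"
      using growth[of t] t by (simp add: psi'_def mult_nonneg_nonpos)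
    ultimately show "\<exists>y. (psi has_real_derivative y) (at t) \<and> y \<le> 0"
      using dpsi[of t] t by auto
  next
    show "continuous_on {0..T} psi"
      by (rule DERIV_continuous_on[where D = psi']) (use DERIV_subset[OF dpsi] in force)
  qed
  then show ?thesis
    by (simp add: psi_def exp_minus field_simps)
qed

lemma pos_part_sq_taylor:
  fixes x y :: real
  shows "\<bar>(max y 0)^2 - (max x 0)^2 - 2 * max x 0 * (y - x)\<bar> \<le> (y - x)^2"
proof (cases "0 \<le> x"; cases "0 \<le> y")
  assume "0 \<le> x" "0 \<le> y"
  then have "(max y 0)^2 - (max x 0)^2 - 2 * max x 0 * (y - x) = (y - x)^2"
    by (simp add: power2_eq_square algebra_simps)
  then show ?thesis
    by simp
next
  assume xy: "0 \<le> x" "\<not> 0 \<le> y"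
  then have "(max y 0)^2 - (max x 0)^2 - 2 * max x 0 * (y - x) = x * x - 2 * (x * y)"
    by (simp add: power2_eq_square algebra_simps)
  moreover have "x * y \<le> 0"
    using xy by (simp add: mult_nonneg_nonpos)
  moreover have "(y - x)^2 = x * x - 2 * (x * y) + y * y" "0 \<le> x * x" "0 \<le> y * y"
    by (simp_all add: power2_eq_square algebra_simps)
  ultimately show ?thesis
    by linarith
next
  assume xy: "\<not> 0 \<le> x" "0 \<le> y"
  then have "(max y 0)^2 - (max x 0)^2 - 2 * max x 0 * (y - x) = y * y"
    by (simp add: power2_eq_square)
  moreover have "x * y \<le> 0"
    using xy by (simp add: mult_nonpos_nonneg)
  moreover have "(y - x)^2 = y * y - 2 * (x * y) + x * x" "0 \<le> x * x" "0 \<le> y * y"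
    by (simp_all add: power2_eq_square algebra_simps)
  ultimately show ?thesis
    by linarith
qed simp

lemma has_real_derivative_pos_part_sq:
  "((\<lambda>x::real. (max x 0)^2) has_real_derivative 2 * max x 0) (at x)"
proof -
  have "((\<lambda>y. ((max y 0)^2 - (max x 0)^2) / (y - x) - 2 * max x 0) \<longlongrightarrow> 0) (at x)"
  proof (rule Lim_null_comparison)
    have "\<bar>((max y 0)^2 - (max x 0)^2) / (y - x) - 2 * max x 0\<bar> \<le> \<bar>y - x\<bar>" if "y \<noteq> x" for y
    proof -
      have "((max y 0)^2 - (max x 0)^2) / (y - x) - 2 * max x 0
          = ((max y 0)^2 - (max x 0)^2 - 2 * max x 0 * (y - x)) / (y - x)"
        using that by (simp add: diff_divide_distrib)
      then have "\<bar>((max y 0)^2 - (max x 0)^2) / (y - x) - 2 * max x 0\<bar>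
          = \<bar>(max y 0)^2 - (max x 0)^2 - 2 * max x 0 * (y - x)\<bar> / \<bar>y - x\<bar>"
        by (simp add: abs_divide)
      also have "\<dots> \<le> (y - x)^2 / \<bar>y - x\<bar>"
        by (intro divide_right_mono pos_part_sq_taylor) auto
      also have "\<dots> = \<bar>y - x\<bar>"
        using that by (metis abs_mult_self_eq power2_eq_square abs_eq_0 eq_iff_diff_eq_0 nonzero_mult_div_cancel_right)
      finally show ?thesis .
    qed
    then show "\<forall>\<^sub>F y in at x. norm (((max y 0)^2 - (max x 0)^2) / (y - x) - 2 * max x 0) \<le> \<bar>y - x\<bar>"
      by (auto simp: eventually_at_filter)
    show "((\<lambda>y. \<bar>y - x\<bar>) \<longlongrightarrow> 0) (at x)"
      by (intro tendsto_eq_intros) auto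
  qed
  then show ?thesis
    by (simp add: has_field_derivative_iff LIM_zero_iff)
qed

lemma nonpos_invariant:
  fixes u u' :: "real \<Rightarrow> 'i::finite \<Rightarrow> real"
  assumes "0 \<le> T" and "0 \<le> c"
    and deriv: "\<And>t i. 0 \<le> t \<Longrightarrow> t \<le> T \<Longrightarrow> ((\<lambda>s. u s i) has_real_derivative u' t i) (at t within {0..})"
    and growth: "\<And>t i. 0 \<le> t \<Longrightarrow> t \<le> T \<Longrightarrow>
           max (u t i) 0 * u' t i \<le> c * max (u t i) 0 * (\<Sum>j\<in>UNIV. max (u t j) 0)"
    and start: "\<And>i. u 0 i \<le> 0"
  shows "u T i \<le> 0"
proof -
  define phi where "phi t = (\<Sum>i\<in>UNIV. (max (u t i) 0)^2)" for t
  have dphi: "(phi has_real_derivative (\<Sum>i\<in>UNIV. 2 * max (u t i) 0 * u' t i)) (at t within {0..})"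
    if "0 \<le> t" "t \<le> T" for t
    unfolding phi_def
    by (intro DERIV_sum DERIV_chain2[OF has_real_derivative_pos_part_sq, simplified] deriv that)
  have "(\<Sum>i\<in>UNIV. 2 * max (u t i) 0 * u' t i) \<le> 2 * c * CARD('i) * phi t"
    if "0 \<le> t" "t \<le> T" for t
  proof -
    have "(\<Sum>i\<in>UNIV. 2 * max (u t i) 0 * u' t i)
        \<le> (\<Sum>i\<in>UNIV. 2 * (c * max (u t i) 0 * (\<Sum>j\<in>UNIV. max (u t j) 0)))"
      using growth[OF that] by (intro sum_mono) (simp add: mult.assoc)
    also have "\<dots> = 2 * c * (\<Sum>i\<in>UNIV. max (u t i) 0)^2"
      by (simp add: power2_eq_square sum_distrib_left sum_distrib_right mult_ac)
    also have "\<dots> \<le> 2 * c * (CARD('i) * phi t)"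
      using \<open>0 \<le> c\<close> sum_squared_le_sum_of_squares[of "\<lambda>i. max (u t i) 0" UNIV]
      unfolding phi_def by (intro mult_left_mono) (simp_all add: mult.commute)
    finally show ?thesis by simp
  qed
  then have "phi T \<le> exp (2 * c * CARD('i) * T) * phi 0"
    by (intro gronwall_inequality[OF \<open>0 \<le> T\<close> dphi])
  moreover have "phi 0 = 0"
    using start by (simp add: phi_def max_absorb2)
  moreover have "(max (u T i) 0)^2 \<le> phi T"
    unfolding phi_def by (rule member_le_sum) auto
  ultimately have "(max (u T i) 0)^2 \<le> 0"
    by (metis mult_zero_right order_trans)
  then show ?thesis
    by (simp add: max_def split: if_splits)
qed

section \<open>Rayleigh bound for symmetric matrices\<close>

lemma inner_matrix_vector_symmetric:
  fixes A :: "real^'n^'n"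
  assumes "transpose A = A"
  shows "x \<bullet> (A *v y) = y \<bullet> (A *v x)"
  by (metis assms dot_lmul_matrix transpose_matrix_vector inner_commute)

lemma finite_eigenvalues_symmetric:
  fixes A :: "real^'n^'n"
  assumes "transpose A = A"
  shows "finite {l. \<exists>x. x \<noteq> 0 \<and> A *v x = l *\<^sub>R x}"
proof -
  define E where "E = {l. \<exists>x. x \<noteq> 0 \<and> A *v x = l *\<^sub>R x}"
  define ev where "ev l = (SOME x. x \<noteq> 0 \<and> A *v x = l *\<^sub>R x)" for l
  have ev: "ev l \<noteq> 0 \<and> A *v ev l = l *\<^sub>R ev l" if "l \<in> E" for l
    using that unfolding E_def ev_def by (metis (mono_tags, lifting) mem_Collect_eq someI_ex)
  have "inj_on ev E"
  proof (rule inj_onI)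
    fix l m assume "l \<in> E" "m \<in> E" "ev l = ev m"
    then show "l = m"
      using ev by (metis scaleR_cancel_right)
  qed
  have "pairwise orthogonal (ev ` E)"
  proof (clarsimp simp: pairwise_def)
    fix l m assume lm: "l \<in> E" "m \<in> E" "ev l \<noteq> ev m"
    have "m * (ev l \<bullet> ev m) = l * (ev l \<bullet> ev m)"
      using inner_matrix_vector_symmetric[OF assms, of "ev l" "ev m"] ev[OF lm(1)] ev[OF lm(2)]
      by (simp add: inner_commute)
    then show "orthogonal (ev l) (ev m)"
      using lm by (auto simp: orthogonal_def)
  qed
  then have "independent (ev ` E)"
    using ev by (intro pairwise_orthogonal_independent) auto
  then have "finite (ev ` E)"
    by (rule independent_imp_finite)
  then have "finite E"
    using \<open>inj_on ev E\<close> by (rule finite_imageD)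
  then show ?thesis
    by (simp add: E_def)
qed

lemma linear_coeff_zero_if_quadratic_nonneg:
  fixes a b :: real
  assumes "\<And>t. 0 \<le> a * t + b * t^2"
  shows "a = 0"
proof -
  define k where "k = \<bar>b\<bar> + 1"
  have k: "0 < k" "b < k"
    by (auto simp: k_def)
  have "0 \<le> a * (- a / k) + b * (- a / k)^2"
    by (rule assms)
  then have "0 \<le> k^2 * (a * (- a / k) + b * (- a / k)^2)"
    by simp
  also have "\<dots> = a^2 * (b - k)"
    using k by (simp add: field_simps power2_eq_square)
  finally show ?thesis
    using k by (auto simp: zero_le_mult_iff)
qed

lemma eigenvector_if_max_quadratic_form:
  fixes A :: "real^'n^'n"
  assumes "transpose A = A"
    and le: "\<And>y. y \<bullet> (A *v y) \<le> M * (y \<bullet> y)"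
    and eq: "x \<bullet> (A *v x) = M * (x \<bullet> x)"
  shows "A *v x = M *\<^sub>R x"
proof -
  define z where "z = A *v x - M *\<^sub>R x"
  have "0 \<le> (- 2 * (z \<bullet> z)) * t + (M * (z \<bullet> z) - z \<bullet> (A *v z)) * t^2" for t
  proof -
    have "x \<bullet> (A *v z) = z \<bullet> (A *v x)"
      by (rule inner_matrix_vector_symmetric[OF assms(1)])
    then have "(x + t *\<^sub>R z) \<bullet> (A *v (x + t *\<^sub>R z))
        = x \<bullet> (A *v x) + 2 * t * (z \<bullet> (A *v x)) + t^2 * (z \<bullet> (A *v z))"
      by (simp add: matrix_vector_right_distrib matrix_vector_mult_scaleR inner_add_left
          inner_add_right power2_eq_square algebra_simps)
    moreover have "(x + t *\<^sub>R z) \<bullet> (x + t *\<^sub>R z) = x \<bullet> x + 2 * t * (z \<bullet> x) + t^2 * (z \<bullet> z)"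
      by (simp add: inner_add_left inner_add_right inner_commute power2_eq_square algebra_simps)
    moreover have "z \<bullet> (A *v x) = z \<bullet> z + M * (z \<bullet> x)"
      by (simp add: z_def inner_diff_left inner_diff_right)
    ultimately show ?thesis
      using le[of "x + t *\<^sub>R z"] eq by (simp only: ring_distribs power2_eq_square mult_ac)
  qed
  then have "- 2 * (z \<bullet> z) = 0"
    by (rule linear_coeff_zero_if_quadratic_nonneg)
  then show ?thesis
    by (simp add: z_def)
qed

lemma quadratic_form_le_lambda1:
  fixes A :: "real^'n^'n"
  assumes "transpose A = A"
  shows "x \<bullet> (A *v x) \<le> lambda1 A * (x \<bullet> x)"
proof -
  have cont: "continuous_on (sphere 0 1) (\<lambda>y. y \<bullet> (A *v y))"
    by (intro continuous_intros linear_continuous_on matrix_vector_mul_bounded_linear)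
  obtain x0 where x0: "x0 \<in> sphere 0 1"
    and max: "\<And>y. y \<in> sphere 0 1 \<Longrightarrow> y \<bullet> (A *v y) \<le> x0 \<bullet> (A *v x0)"
    using continuous_attains_sup[OF compact_sphere _ cont] by auto
  define M where "M = x0 \<bullet> (A *v x0)"
  have x0_unit: "x0 \<bullet> x0 = 1"
    using x0 by (simp add: power2_norm_eq_inner[symmetric])
  have bound: "y \<bullet> (A *v y) \<le> M * (y \<bullet> y)" for y
  proof (cases "y = 0")
    case False
    define c where "c = norm y"
    have "c > 0"
      using False by (simp add: c_def)
    have "(1 / c) *\<^sub>R y \<in> sphere 0 1"
      using \<open>c > 0\<close> by (simp add: c_def)
    then have "((1 / c) *\<^sub>R y) \<bullet> (A *v ((1 / c) *\<^sub>R y)) \<le> M"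
      unfolding M_def by (rule max)
    then have "(y \<bullet> (A *v y)) / c^2 \<le> M"
      by (simp add: power2_eq_square matrix_vector_mult_scaleR)
    then show ?thesis
      using \<open>c > 0\<close> by (simp add: pos_divide_le_eq c_def power2_norm_eq_inner)
  qed simp
  have "A *v x0 = M *\<^sub>R x0"
    using assms bound by (rule eigenvector_if_max_quadratic_form) (simp add: M_def x0_unit)
  moreover have "x0 \<noteq> 0"
    using x0_unit by auto
  ultimately have "M \<le> lambda1 A"
    unfolding lambda1_def by (intro Max_ge finite_eigenvalues_symmetric[OF assms]) auto
  then show ?thesis
    using bound[of x] by (meson inner_ge_zero mult_right_mono order_trans)
qed

section \<open>The NIMFA vector field\<close>

definition nimfa_field :: "real^'n^'n \<Rightarrow> real \<Rightarrow> real^'n \<Rightarrow> real^'n" where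
  "nimfa_field A tau x = (\<chi> i. - x $ i + tau * (1 - x $ i) * (A *v x) $ i)"

lemma nimfa_field_zero [simp]: "nimfa_field A tau 0 = 0"
  by (simp add: nimfa_field_def vec_eq_iff)

lemma nimfa_solution_deriv:
  fixes A :: "real^'n^'n"
  assumes "nimfa_solution A tau V0 v" and "0 \<le> t"
  shows "((\<lambda>s. v s $ i) has_real_derivative nimfa_field A tau (v t) $ i) (at t within {0..})"
  using assms by (simp add: nimfa_solution_def nimfa_field_def matrix_vector_mult_def)

lemma simple_graph_adj_transpose: "simple_graph_adj A \<Longrightarrow> transpose A = A"
  by (simp add: simple_graph_adj_def transpose_def vec_eq_iff)

lemma simple_graph_adj_mult_nonneg:
  fixes A :: "real^'n^'n"
  assumes "simple_graph_adj A" and "\<And>j. 0 \<le> x $ j"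
  shows "0 \<le> (A *v x) $ i"
proof -
  have "0 \<le> A $ i $ j" for j
    using assms(1) by (metis simple_graph_adj_def zero_le_one order_refl)
  then show ?thesis
    using assms(2) by (simp add: matrix_vector_mult_def sum_nonneg)
qed

lemma simple_graph_adj_mult_le_pos_part:
  fixes A :: "real^'n^'n"
  assumes "simple_graph_adj A"
  shows "(A *v x) $ i \<le> (\<Sum>j\<in>UNIV. max (x $ j) 0)"
  unfolding matrix_vector_mult_def
proof (simp, rule sum_mono)
  fix j
  have "A $ i $ j = 0 \<or> A $ i $ j = 1"
    using assms by (simp add: simple_graph_adj_def)
  then show "A $ i $ j * x $ j \<le> max (x $ j) 0"
    by auto
qed

text \<open>Only the factor \<open>1 - y $ i\<close> of the upper state enters the estimate; nonnegativity of the
  lower state disposes of the cross term \<open>- tau (x $ i - y $ i) (A *v x) $ i\<close>.\<close>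
lemma nimfa_field_one_sided_lipschitz:
  fixes A :: "real^'n^'n"
  assumes G: "simple_graph_adj A" and "0 \<le> tau" and "0 \<le> C"
    and x: "\<And>j. 0 \<le> x $ j"
    and y: "y $ i < x $ i \<Longrightarrow> 0 \<le> 1 - y $ i \<and> 1 - y $ i \<le> C"
  shows "max (x $ i - y $ i) 0 * (nimfa_field A tau x $ i - nimfa_field A tau y $ i)
    \<le> tau * C * max (x $ i - y $ i) 0 * (\<Sum>j\<in>UNIV. max (x $ j - y $ j) 0)"
proof (cases "y $ i < x $ i")
  case True
  define d where "d = x $ i - y $ i"
  define P where "P = (\<Sum>j\<in>UNIV. max (x $ j - y $ j) 0)"
  have d: "0 < d" and y': "0 \<le> 1 - y $ i" "1 - y $ i \<le> C"
    using True y by (auto simp: d_def)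
  have Ax: "0 \<le> (A *v x) $ i"
    using G x by (rule simple_graph_adj_mult_nonneg)
  have Ad: "(A *v (x - y)) $ i \<le> P"
    using simple_graph_adj_mult_le_pos_part[OF G, of "x - y" i] by (simp add: P_def)
  have "nimfa_field A tau x $ i - nimfa_field A tau y $ i
      = - d - tau * d * (A *v x) $ i + tau * (1 - y $ i) * (A *v (x - y)) $ i"
    by (simp add: nimfa_field_def d_def algebra_simps)
  also have "\<dots> \<le> tau * (1 - y $ i) * P"
    using d Ax Ad y' \<open>0 \<le> tau\<close> by (smt (verit) mult_left_mono mult_nonneg_nonneg)
  also have "\<dots> \<le> tau * C * P"
    using y' \<open>0 \<le> tau\<close> by (intro mult_right_mono mult_left_mono) (auto simp: P_def sum_nonneg)
  finally show ?thesis
    using d by (simp add: d_def[symmetric] P_def[symmetric] mult_left_mono mult.assoc mult.left_commute)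
qed (use assms in \<open>simp add: sum_nonneg\<close>)

lemma nimfa_field_nonpos_above_one:
  fixes A :: "real^'n^'n"
  assumes "simple_graph_adj A" and "0 \<le> tau" and "\<And>j. 0 \<le> x $ j" and "1 \<le> x $ i"
  shows "nimfa_field A tau x $ i \<le> 0"
proof -
  have "0 \<le> (A *v x) $ i"
    using assms(1,3) by (rule simple_graph_adj_mult_nonneg)
  then have "tau * (1 - x $ i) * (A *v x) $ i \<le> 0"
    using assms(2,4) by (intro mult_nonpos_nonneg mult_nonneg_nonpos) auto
  then show ?thesis
    using assms(3)[of i] by (simp add: nimfa_field_def)
qed

lemma inner_nimfa_field_le:
  fixes A :: "real^'n^'n"
  assumes "simple_graph_adj A" and "0 \<le> tau" and "\<And>j. 0 \<le> x $ j"
  shows "x \<bullet> nimfa_field A tau x \<le> tau * (x \<bullet> (A *v x)) - x \<bullet> x"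
proof -
  have pointwise: "x $ i * nimfa_field A tau x $ i \<le> tau * (x $ i * (A *v x) $ i) - x $ i * x $ i" for i
  proof -
    have "0 \<le> (A *v x) $ i"
      using assms(1,3) by (rule simple_graph_adj_mult_nonneg)
    then have "0 \<le> tau * (x $ i * x $ i) * (A *v x) $ i"
      using assms(2) by simp
    then show ?thesis
      by (simp add: nimfa_field_def algebra_simps)
  qed
  have "(\<Sum>i\<in>UNIV. x $ i * nimfa_field A tau x $ i)
      \<le> (\<Sum>i\<in>UNIV. tau * (x $ i * (A *v x) $ i) - x $ i * x $ i)"
    by (rule sum_mono) (rule pointwise)
  then show ?thesis
    by (simp add: inner_vec_def sum_subtractf sum_distrib_left)
qed

section \<open>Invariance, comparison and decay of trajectories\<close>

lemma bounded_components_if_derivative: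
  fixes v :: "real \<Rightarrow> real^'n"
  assumes "\<And>t i. 0 \<le> t \<Longrightarrow> t \<le> T \<Longrightarrow> ((\<lambda>s. v s $ i) has_real_derivative v' t i) (at t within {0..})"
  obtains B where "\<And>t i. 0 \<le> t \<Longrightarrow> t \<le> T \<Longrightarrow> \<bar>v t $ i\<bar> \<le> B"
proof -
  have "continuous_on {0..T} (\<lambda>s. v s $ i)" for i
  proof (rule DERIV_continuous_on)
    fix s assume "s \<in> {0..T}"
    then show "((\<lambda>s. v s $ i) has_real_derivative v' s i) (at s within {0..T})"
      using assms[of s i] by (auto intro: DERIV_subset)
  qed
  then have "continuous_on {0..T} (\<lambda>s. \<chi> i. v s $ i)"
    by (rule continuous_on_vec_lambda)
  then have "bounded (v ` {0..T})"
    by (simp add: compact_imp_bounded compact_continuous_image)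
  then obtain B where "\<forall>t\<in>{0..T}. norm (v t) \<le> B"
    by (auto simp: bounded_iff)
  then show ?thesis
    by (meson that atLeastAtMost_iff component_le_norm_cart order_trans)
qed

lemma nimfa_comparison:
  fixes x y :: "real \<Rightarrow> real^'n"
  assumes G: "simple_graph_adj A" and "0 \<le> tau" and "0 \<le> T" and "0 \<le> C"
    and dx: "\<And>t i. 0 \<le> t \<Longrightarrow> t \<le> T \<Longrightarrow>
      ((\<lambda>s. x s $ i) has_real_derivative nimfa_field A tau (x t) $ i) (at t within {0..})"
    and dy: "\<And>t i. 0 \<le> t \<Longrightarrow> t \<le> T \<Longrightarrow>
      ((\<lambda>s. y s $ i) has_real_derivative nimfa_field A tau (y t) $ i) (at t within {0..})"
    and x_nonneg: "\<And>t j. 0 \<le> t \<Longrightarrow> t \<le> T \<Longrightarrow> 0 \<le> x t $ j"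
    and y_range: "\<And>t i. 0 \<le> t \<Longrightarrow> t \<le> T \<Longrightarrow> y t $ i < x t $ i \<Longrightarrow>
      0 \<le> 1 - y t $ i \<and> 1 - y t $ i \<le> C"
    and start: "\<And>i. x 0 $ i \<le> y 0 $ i"
  shows "x T $ i \<le> y T $ i"
proof -
  have "x T $ i - y T $ i \<le> 0"
  proof (rule nonpos_invariant[where u = "\<lambda>t i. x t $ i - y t $ i" and c = "tau * C"])
    fix t i assume t: "0 \<le> t" "t \<le> T"
    show "((\<lambda>s. x s $ i - y s $ i) has_real_derivative
        nimfa_field A tau (x t) $ i - nimfa_field A tau (y t) $ i) (at t within {0..})"
      using dx[OF t] dy[OF t] by (rule DERIV_diff)
    show "max (x t $ i - y t $ i) 0 * (nimfa_field A tau (x t) $ i - nimfa_field A tau (y t) $ i)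
        \<le> tau * C * max (x t $ i - y t $ i) 0 * (\<Sum>j\<in>UNIV. max (x t $ j - y t $ j) 0)"
      using G \<open>0 \<le> tau\<close> \<open>0 \<le> C\<close> x_nonneg[OF t] y_range[OF t]
      by (rule nimfa_field_one_sided_lipschitz)
  qed (use assms in auto)
  then show ?thesis
    by simp
qed

lemma nimfa_solution_nonneg:
  fixes A :: "real^'n^'n"
  assumes G: "simple_graph_adj A" and "0 \<le> tau" and sol: "nimfa_solution A tau V0 v"
    and "\<And>j. 0 \<le> V0 $ j" and "0 \<le> t"
  shows "0 \<le> v t $ i"
proof -
  have deriv: "((\<lambda>s. v s $ j) has_real_derivative nimfa_field A tau (v s) $ j) (at s within {0..})"
    if "0 \<le> s" "s \<le> t" for s j
    using sol that(1) by (rule nimfa_solution_deriv)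
  obtain B where B: "\<And>s j. 0 \<le> s \<Longrightarrow> s \<le> t \<Longrightarrow> \<bar>v s $ j\<bar> \<le> B"
    using bounded_components_if_derivative[OF deriv] by blast
  have "0 \<le> B"
    using B[of 0] \<open>0 \<le> t\<close> by fastforce
  have "(0 :: real^'n) $ i \<le> v t $ i"
  proof (rule nimfa_comparison[OF G \<open>0 \<le> tau\<close> \<open>0 \<le> t\<close>, where x = "\<lambda>_. 0" and C = "1 + B"])
    fix s j assume s: "0 \<le> s" "s \<le> t"
    show "((\<lambda>s. (0 :: real^'n) $ j) has_real_derivative nimfa_field A tau 0 $ j) (at s within {0..})"
      by simp
    show "((\<lambda>s. v s $ j) has_real_derivative nimfa_field A tau (v s) $ j) (at s within {0..})"
      using s by (rule deriv)
    show "v s $ j < (0 :: real^'n) $ j \<Longrightarrow> 0 \<le> 1 - v s $ j \<and> 1 - v s $ j \<le> 1 + B"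
      using B[OF s, of j] by auto
  qed (use assms \<open>0 \<le> B\<close> in \<open>auto simp: nimfa_solution_def\<close>)
  then show ?thesis
    by simp
qed

lemma nimfa_solution_le_one:
  fixes A :: "real^'n^'n"
  assumes G: "simple_graph_adj A" and "0 \<le> tau" and sol: "nimfa_solution A tau V0 v"
    and V0: "\<And>j. 0 \<le> V0 $ j \<and> V0 $ j \<le> 1" and "0 \<le> t"
  shows "v t $ i \<le> 1"
proof -
  have nonneg: "0 \<le> v s $ j" if "0 \<le> s" for s j
    using nimfa_solution_nonneg[OF G \<open>0 \<le> tau\<close> sol _ that] V0 by blast
  have "v t $ i - 1 \<le> 0"
  proof (rule nonpos_invariant[where u = "\<lambda>t i. v t $ i - 1" and c = 0])
    fix s j assume s: "0 \<le> s" "s \<le> t"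
    show "((\<lambda>s. v s $ j - 1) has_real_derivative nimfa_field A tau (v s) $ j) (at s within {0..})"
      using DERIV_diff[OF nimfa_solution_deriv[OF sol s(1)] DERIV_const] by simp
    have "1 < v s $ j \<Longrightarrow> nimfa_field A tau (v s) $ j \<le> 0"
      using G \<open>0 \<le> tau\<close> nonneg[OF s(1)] by (simp add: nimfa_field_nonpos_above_one)
    then show "max (v s $ j - 1) 0 * nimfa_field A tau (v s) $ j
        \<le> 0 * max (v s $ j - 1) 0 * (\<Sum>k\<in>UNIV. max (v s $ k - 1) 0)"
      by (auto simp: max_def mult_nonneg_nonpos)
  qed (use assms in \<open>auto simp: nimfa_solution_def\<close>)
  then show ?thesis
    by simp
qed

lemma nimfa_solution_mono:
  fixes A :: "real^'n^'n"
  assumes G: "simple_graph_adj A" and "0 \<le> tau"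
    and solv: "nimfa_solution A tau V0 v" and solw: "nimfa_solution A tau W0 w"
    and V0: "\<And>j. 0 \<le> V0 $ j" and W0: "\<And>j. 0 \<le> W0 $ j \<and> W0 $ j \<le> 1"
    and le: "\<And>j. V0 $ j \<le> W0 $ j" and "0 \<le> t"
  shows "v t $ i \<le> w t $ i"
proof (rule nimfa_comparison[OF G \<open>0 \<le> tau\<close> \<open>0 \<le> t\<close>, where C = 1])
  fix s j assume s: "0 \<le> s" "s \<le> t"
  show "((\<lambda>s. v s $ j) has_real_derivative nimfa_field A tau (v s) $ j) (at s within {0..})"
    using solv s(1) by (rule nimfa_solution_deriv)
  show "((\<lambda>s. w s $ j) has_real_derivative nimfa_field A tau (w s) $ j) (at s within {0..})"
    using solw s(1) by (rule nimfa_solution_deriv)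
  show "0 \<le> v s $ j"
    using G \<open>0 \<le> tau\<close> solv V0 s(1) by (rule nimfa_solution_nonneg)
  show "0 \<le> 1 - w s $ j \<and> 1 - w s $ j \<le> 1"
    using nimfa_solution_nonneg[OF G \<open>0 \<le> tau\<close> solw _ s(1)]
      nimfa_solution_le_one[OF G \<open>0 \<le> tau\<close> solw W0 s(1)] W0 by auto
next
  show "v 0 $ j \<le> w 0 $ j" for j
    using solv solw le by (simp add: nimfa_solution_def)
qed simp

lemma nimfa_solution_norm_decay:
  fixes A :: "real^'n^'n"
  assumes G: "simple_graph_adj A" and "0 \<le> tau" and sol: "nimfa_solution A tau V0 v"
    and V0: "\<And>j. 0 \<le> V0 $ j" and "0 \<le> t"
  shows "v t \<bullet> v t \<le> exp (2 * (R0 A tau - 1) * t) * (V0 \<bullet> V0)"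
proof -
  have "v t \<bullet> v t \<le> exp (2 * (R0 A tau - 1) * t) * (v 0 \<bullet> v 0)"
  proof (rule gronwall_inequality[OF \<open>0 \<le> t\<close>])
    fix s :: real assume s: "0 \<le> s" "s \<le> t"
    have "((\<lambda>s. \<Sum>i\<in>UNIV. v s $ i * v s $ i) has_real_derivative
        (\<Sum>i\<in>UNIV. nimfa_field A tau (v s) $ i * v s $ i + nimfa_field A tau (v s) $ i * v s $ i))
        (at s within {0..})"
      by (intro DERIV_sum) (rule DERIV_mult[OF nimfa_solution_deriv[OF sol s(1)] nimfa_solution_deriv[OF sol s(1)]])
    then show "((\<lambda>s. v s \<bullet> v s) has_real_derivative 2 * (v s \<bullet> nimfa_field A tau (v s))) (at s within {0..})"
      by (simp add: inner_vec_def sum.distrib sum_distrib_left mult.commute)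
    have "v s \<bullet> nimfa_field A tau (v s) \<le> tau * (v s \<bullet> (A *v v s)) - v s \<bullet> v s"
      using G \<open>0 \<le> tau\<close> nimfa_solution_nonneg[OF G \<open>0 \<le> tau\<close> sol V0 s(1)] by (rule inner_nimfa_field_le)
    also have "\<dots> \<le> (R0 A tau - 1) * (v s \<bullet> v s)"
      using quadratic_form_le_lambda1[OF simple_graph_adj_transpose[OF G], of "v s"] \<open>0 \<le> tau\<close>
      by (simp add: R0_def algebra_simps mult_left_mono)
    finally show "2 * (v s \<bullet> nimfa_field A tau (v s)) \<le> 2 * (R0 A tau - 1) * (v s \<bullet> v s)"
      by (simp only: mult.assoc)
  qed
  then show ?thesis
    using sol by (simp add: nimfa_solution_def)
qed

lemma prevalence_nonneg:
  fixes A :: "real^'n^'n"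
  assumes "simple_graph_adj A" and "0 \<le> tau" and "nimfa_solution A tau V0 v"
    and "\<And>j. 0 \<le> V0 $ j" and "0 \<le> t"
  shows "0 \<le> prevalence v t"
  unfolding prevalence_def using nimfa_solution_nonneg[OF assms]
  by (intro divide_nonneg_nonneg sum_nonneg) auto

lemma prevalence_le_exp:
  fixes A :: "real^'n^'n"
  assumes G: "simple_graph_adj A" and "0 \<le> tau" and sol: "nimfa_solution A tau V0 v"
    and V0: "\<And>j. 0 \<le> V0 $ j \<and> V0 $ j \<le> 1" and "0 \<le> t"
  shows "prevalence v t \<le> exp ((R0 A tau - 1) * t)"
proof -
  define N where "N = real CARD('n)"
  have "V0 \<bullet> V0 \<le> (\<Sum>j\<in>(UNIV :: 'n set). 1)"
    unfolding inner_vec_def using V0 by (intro sum_mono) (simp add: mult_le_one)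
  then have V0_norm: "V0 \<bullet> V0 \<le> N"
    by (simp add: N_def)
  have "(\<Sum>j\<in>UNIV. v t $ j)^2 \<le> N * (v t \<bullet> v t)"
    using sum_squared_le_sum_of_squares[of "\<lambda>j. v t $ j" UNIV]
    by (simp add: N_def inner_vec_def power2_eq_square mult.commute)
  also have "\<dots> \<le> N * (exp (2 * (R0 A tau - 1) * t) * N)"
  proof -
    have "v t \<bullet> v t \<le> exp (2 * (R0 A tau - 1) * t) * (V0 \<bullet> V0)"
      using nimfa_solution_norm_decay[OF G \<open>0 \<le> tau\<close> sol _ \<open>0 \<le> t\<close>] V0 by blast
    also have "\<dots> \<le> exp (2 * (R0 A tau - 1) * t) * N"
      using V0_norm by (rule mult_left_mono) simp
    finally show ?thesis
      by (rule mult_left_mono) (simp add: N_def)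
  qed
  also have "\<dots> = (exp ((R0 A tau - 1) * t) * N)^2"
    by (simp add: power2_eq_square algebra_simps flip: exp_add)
  finally have "(\<Sum>j\<in>UNIV. v t $ j) \<le> exp ((R0 A tau - 1) * t) * N"
    by (rule power2_le_imp_le) (simp add: N_def)
  then show ?thesis
    by (simp add: prevalence_def N_def divide_le_eq)
qed

lemma upper_T_le:
  assumes "0 \<le> T"
    and "\<And>V0 v. V0 \<in> unit_cube r \<Longrightarrow> nimfa_solution A tau V0 v \<Longrightarrow> \<bar>prevalence v T\<bar> \<le> r"
  shows "upper_T A tau r \<le> T"
  unfolding upper_T_def using assms by (intro cInf_lower) (auto intro: bdd_belowI[where m = 0])

lemma upper_T_le_log:
  fixes A :: "real^'n^'n"
  assumes G: "simple_graph_adj A" and tau: "0 \<le> tau" and "R0 A tau < 1" and r: "0 < r" "r < 1"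
  shows "upper_T A tau r \<le> 1 / (1 - R0 A tau) * ln (1 / r)"
proof -
  define T where "T = 1 / (1 - R0 A tau) * ln (1 / r)"
  have "0 \<le> T"
    using r \<open>R0 A tau < 1\<close> by (simp add: T_def)
  have "(R0 A tau - 1) * T = ln r"
    using r \<open>R0 A tau < 1\<close> by (simp add: T_def ln_div field_simps)
  then have exp_T: "exp ((R0 A tau - 1) * T) = r"
    using r by simp
  have "upper_T A tau r \<le> T"
  proof (rule upper_T_le[OF \<open>0 \<le> T\<close>])
    fix V0 v assume "V0 \<in> unit_cube r" and sol: "nimfa_solution A tau V0 v"
    then have V0: "\<And>j. 0 \<le> V0 $ j \<and> V0 $ j \<le> 1"
      using r by (auto simp: unit_cube_def intro: order_trans[of 0 r])
    show "\<bar>prevalence v T\<bar> \<le> r"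
      using prevalence_nonneg[OF G tau sol _ \<open>0 \<le> T\<close>] prevalence_le_exp[OF G tau sol V0 \<open>0 \<le> T\<close>]
        exp_T V0 by auto
  qed
  then show ?thesis
    by (simp add: T_def)
qed

theorem lemma2:
  fixes A :: "real^'n^'n" and tau :: real
  assumes "simple_graph_adj A"
    and "0 < tau" and "R0 A tau < 1"
  shows "(\<forall>V0 \<in> unit_cube 0. \<forall>v w t.
            nimfa_solution A tau V0 v \<longrightarrow> nimfa_solution A tau (\<chi> i. 1) w \<longrightarrow> 0 \<le> t \<longrightarrow>
              prevalence v t \<le> prevalence w t \<and>
              prevalence w t \<le> exp ((R0 A tau - 1) * t))
       \<and> (\<forall>r. 0 < r \<and> r < 1 \<longrightarrow> upper_T A tau r \<le> 1 / (1 - R0 A tau) * ln (1 / r))"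
proof -
  note G = \<open>simple_graph_adj A\<close>
  have tau: "0 \<le> tau"
    using \<open>0 < tau\<close> by simp
  have ones: "\<And>j. 0 \<le> (\<chi> i. 1 :: real^'n) $ j \<and> (\<chi> i. 1 :: real^'n) $ j \<le> 1"
    by simp
  have "prevalence v t \<le> prevalence w t \<and> prevalence w t \<le> exp ((R0 A tau - 1) * t)"
    if "V0 \<in> unit_cube 0" and solv: "nimfa_solution A tau V0 v"
      and solw: "nimfa_solution A tau (\<chi> i. 1) w" and "0 \<le> t" for V0 v w t
  proof
    have V0: "\<And>j. 0 \<le> V0 $ j \<and> V0 $ j \<le> 1"
      using \<open>V0 \<in> unit_cube 0\<close> by (simp add: unit_cube_def)
    show "prevalence v t \<le> prevalence w t"
      unfolding prevalence_def using V0
      by (intro divide_right_mono sum_mono nimfa_solution_mono[OF G tau solv solw _ ones _ \<open>0 \<le> t\<close>]) auto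
    show "prevalence w t \<le> exp ((R0 A tau - 1) * t)"
      using G tau solw ones \<open>0 \<le> t\<close> by (rule prevalence_le_exp)
  qed
  moreover have "upper_T A tau r \<le> 1 / (1 - R0 A tau) * ln (1 / r)" if "0 < r \<and> r < 1" for r
    using G tau \<open>R0 A tau < 1\<close> that by (intro upper_T_le_log) auto
  ultimately show ?thesis
    by blast
qed

end
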